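(* Let $S$ be a semigroup and $a\in S$ an idempotent with $aSa\subseteq\operatorname{Reg}(S)$; put $P=\{x\in Sa: x\,\mathscr L\,ax\}$ (a regular subsemigroup of $Sa$) and $\phi:P\to aSa$, $x\mapsto ax$. Let $x\in P$, and let $r$ be the number of $\mathscr R^P$-classes contained in $\widehat R^a_x$. Then: (i) the restriction of $\phi$ to $H^P_x$ is a bijection $H^P_x\to H^{aSa}_{ax}$; (ii) $H^P_x$ is a group if and only if $H^{aSa}_{ax}$ is a group, in which case these groups are isomorphic; (iii) if $H^P_x$ is a group, then $\widehat H^a_x$ is a left group of degree $r$ over $H^P_x$; (iv) if $H^P_x$ is a group, then the set of idempotents of $\widehat H^a_x$ is a left zero band of size $r$.
   Context: $\operatorname{Reg}(S)$ is the set of regular elements of $S$. Green's relations $\mathscr K\in\{\mathscr L,\mathscr R,\mathscr H,\mathscr D,\mathscr J\}$ are taken in $S$, in $P$ (written $\mathscr K^P$, classes $K^P_x$) or in the monoid $aSa$ (written $\mathscr K^{aSa}$, classes $K^{aSa}_y$). For each $\mathscr K$, define the relation $\widehat{\mathscr K}^a$ on $P$ by $x\,\widehat{\mathscr K}^a\,y$ iff $(ax,ay)\in\mathscr K^{aSa}$; $\widehat K^a_x$ denotes the $\widehat{\mathscr K}^a$-class of $x$ in $P$. A left zero band is a semigroup $U$ with $uv=u$ for all $u,v\in U$; a left group of degree $r$ over a group $G$ is a semigroup isomorphic to $U\times G$ with $U$ a left zero band of cardinality $r$. *)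

theory Defs
  imports Main "HOL-Library.Equipollence"
begin

text \<open>The semigroup S is the whole type 'a of class semigroup_mult.
  Green's relations are taken relative to a subsemigroup T (the carrier),
  via T^1 x = T^1 y etc.\<close>

definition gL :: "'a::semigroup_mult set \<Rightarrow> 'a \<Rightarrow> 'a \<Rightarrow> bool" where
  "gL T x y \<longleftrightarrow> x \<in> T \<and> y \<in> T \<and>
     (x = y \<or> (\<exists>u\<in>T. x = u * y)) \<and> (y = x \<or> (\<exists>v\<in>T. y = v * x))"

definition gR :: "'a::semigroup_mult set \<Rightarrow> 'a \<Rightarrow> 'a \<Rightarrow> bool" where
  "gR T x y \<longleftrightarrow> x \<in> T \<and> y \<in> T \<and>
     (x = y \<or> (\<exists>u\<in>T. x = y * u)) \<and> (y = x \<or> (\<exists>v\<in>T. y = x * v))"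

definition gH :: "'a::semigroup_mult set \<Rightarrow> 'a \<Rightarrow> 'a \<Rightarrow> bool" where
  "gH T x y \<longleftrightarrow> gL T x y \<and> gR T x y"

definition gclass :: "('a set \<Rightarrow> 'a \<Rightarrow> 'a \<Rightarrow> bool) \<Rightarrow> 'a set \<Rightarrow> 'a \<Rightarrow> 'a set" where
  "gclass K T x = {y. K T x y}"

definition Reg :: "'a::semigroup_mult set" where
  "Reg = {x. \<exists>y. x * y * x = x}"

definition aSa :: "'a::semigroup_mult \<Rightarrow> 'a set" where
  "aSa a = {a * s * a | s. True}"

definition Sa :: "'a::semigroup_mult \<Rightarrow> 'a set" where
  "Sa a = {s * a | s. True}"

definition Pset :: "'a::semigroup_mult \<Rightarrow> 'a set" where
  "Pset a = {x \<in> Sa a. gL UNIV x (a * x)}"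

definition hatclass :: "('a::semigroup_mult set \<Rightarrow> 'a \<Rightarrow> 'a \<Rightarrow> bool) \<Rightarrow> 'a \<Rightarrow> 'a \<Rightarrow> 'a set" where
  "hatclass K a x = {y \<in> Pset a. K (aSa a) (a * x) (a * y)}"

definition is_group :: "'a::semigroup_mult set \<Rightarrow> bool" where
  "is_group G \<longleftrightarrow> G \<noteq> {} \<and> (\<forall>x\<in>G. \<forall>y\<in>G. x * y \<in> G) \<and>
     (\<exists>e\<in>G. \<forall>x\<in>G. e * x = x \<and> x * e = x \<and> (\<exists>y\<in>G. x * y = e \<and> y * x = e))"

definition sg_iso :: "'a::semigroup_mult set \<Rightarrow> 'a set \<Rightarrow> bool" where
  "sg_iso G K \<longleftrightarrow> (\<exists>f. bij_betw f G K \<and> (\<forall>x\<in>G. \<forall>y\<in>G. f (x * y) = f x * f y))"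

text \<open>T (a subsemigroup) is isomorphic to U \<times> G, U a left zero band, G a group.\<close>
definition left_group_over :: "'a::semigroup_mult set \<Rightarrow> 'b set \<Rightarrow> 'a set \<Rightarrow> bool" where
  "left_group_over T U G \<longleftrightarrow> is_group G \<and> (\<forall>x\<in>T. \<forall>y\<in>T. x * y \<in> T) \<and>
     (\<exists>f. bij_betw f T (U \<times> G) \<and>
        (\<forall>x\<in>T. \<forall>y\<in>T. f (x * y) = (fst (f x), snd (f x) * snd (f y))))"

definition left_zero_band :: "'a::semigroup_mult set \<Rightarrow> bool" where
  "left_zero_band U \<longleftrightarrow> (\<forall>u\<in>U. \<forall>v\<in>U. u * v = u)"

end

theory Submission
  imports Defs
begin

text \<open>For x in P we have x a = x, so phi x = a x is a homomorphism from P into aSa, and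
  x = t a x lets one cancel a on the left, which makes phi injective on every R-class of P.
  Regularity of aSa sharpens x = t a x to x = q a x with q in P; hence phi reflects L, and every
  step a x R a x u in aSa lifts to the step x R x u in P. So phi maps the H-class of x in P
  bijectively and homomorphically onto the H-class of a x in aSa. When this is a group G, the
  R-classes C of P inside the hat-R-class of x together with G coordinatise the hat-H-class of x:
  each pair (C, g) has exactly one lift y in C with a y = g, and y z stays in the R-class of y.
  The idempotents are the lifts of the identity of G.\<close>

lemma mem_gclass: "y \<in> gclass K T x \<longleftrightarrow> K T x y"
  by (simp add: gclass_def)

lemma gR_refl: "x \<in> T \<Longrightarrow> gR T x x"
  by (simp add: gR_def)

lemma gR_sym: "gR T x y \<Longrightarrow> gR T y x"
  unfolding gR_def by blast

lemma gL_sym: "gL T x y \<Longrightarrow> gL T y x"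
  unfolding gL_def by blast

lemma gR_trans:
  assumes closed: "\<And>u v. u \<in> T \<Longrightarrow> v \<in> T \<Longrightarrow> u * v \<in> T"
    and "gR T x y" and "gR T y z"
  shows "gR T x z"
proof -
  have step: "p = r \<or> (\<exists>u\<in>T. p = r * u)"
    if "p = q \<or> (\<exists>u\<in>T. p = q * u)" and "q = r \<or> (\<exists>u\<in>T. q = r * u)" for p q r
    using that by (elim disjE bexE) (auto simp: mult.assoc intro: closed)
  show ?thesis
    using assms(2,3) step[of x y z] step[of z y x] unfolding gR_def by blast
qed

lemma gL_trans:
  assumes closed: "\<And>u v. u \<in> T \<Longrightarrow> v \<in> T \<Longrightarrow> u * v \<in> T"
    and "gL T x y" and "gL T y z"
  shows "gL T x z"
proof -
  have step: "p = r \<or> (\<exists>u\<in>T. p = u * r)"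
    if "p = q \<or> (\<exists>u\<in>T. p = u * q)" and "q = r \<or> (\<exists>u\<in>T. q = u * r)" for p q r
    using that by (elim disjE bexE) (auto simp flip: mult.assoc intro: closed)
  show ?thesis
    using assms(2,3) step[of x y z] step[of z y x] unfolding gL_def by blast
qed

lemma gclass_gR_eq:
  assumes closed: "\<And>u v. u \<in> T \<Longrightarrow> v \<in> T \<Longrightarrow> u * v \<in> T"
    and "gR T y w"
  shows "gclass gR T y = gclass gR T w"
proof -
  have "gR T w y" using assms(2) by (rule gR_sym)
  then show ?thesis
    unfolding gclass_def using assms(2) gR_trans[OF closed] by blast
qed

lemma gR_iff_right_units:
  assumes units: "\<And>y. y \<in> T \<Longrightarrow> \<exists>e\<in>T. y * e = y"
  shows "gR T x y \<longleftrightarrow> x \<in> T \<and> y \<in> T \<and> (\<exists>u\<in>T. x = y * u) \<and> (\<exists>v\<in>T. y = x * v)"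
proof -
  have "(p = q \<or> (\<exists>u\<in>T. p = q * u)) \<longleftrightarrow> (\<exists>u\<in>T. p = q * u)" if "q \<in> T" for p q
    using units[OF that] by metis
  then show ?thesis unfolding gR_def by blast
qed

lemma gL_iff_left_units:
  assumes units: "\<And>y. y \<in> T \<Longrightarrow> \<exists>e\<in>T. e * y = y"
  shows "gL T x y \<longleftrightarrow> x \<in> T \<and> y \<in> T \<and> (\<exists>u\<in>T. x = u * y) \<and> (\<exists>v\<in>T. y = v * x)"
proof -
  have "(p = q \<or> (\<exists>u\<in>T. p = u * q)) \<longleftrightarrow> (\<exists>u\<in>T. p = u * q)" if "q \<in> T" for p q
    using units[OF that] by metis
  then show ?thesis unfolding gL_def by blast
qed

lemma is_group_closed: "is_group G \<Longrightarrow> x \<in> G \<Longrightarrow> y \<in> G \<Longrightarrow> x * y \<in> G"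
  unfolding is_group_def by blast

lemma is_group_has_idempotent: "is_group G \<Longrightarrow> \<exists>e\<in>G. e * e = e"
  unfolding is_group_def by blast

lemma is_group_bij_hom_image:
  assumes bij: "bij_betw f A B"
    and hom: "\<And>x y. x \<in> A \<Longrightarrow> y \<in> A \<Longrightarrow> f (x * y) = f x * f y"
    and A: "is_group A"
  shows "is_group B"
proof -
  have B: "B = f ` A" using bij by (simp add: bij_betw_def)
  obtain e where e: "e \<in> A" "\<forall>x\<in>A. e * x = x \<and> x * e = x \<and> (\<exists>y\<in>A. x * y = e \<and> y * x = e)"
    using A unfolding is_group_def by blast
  have "f p * f q \<in> B" if "p \<in> A" "q \<in> A" for p q
  proof -
    have "f p * f q = f (p * q)" using hom[OF that] by simp
    then show ?thesis using B is_group_closed[OF A that] by blast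
  qed
  then have "\<forall>x\<in>B. \<forall>y\<in>B. x * y \<in> B"
    unfolding B by blast
  moreover have "f e * f p = f p \<and> f p * f e = f p \<and> (\<exists>y\<in>B. f p * y = f e \<and> y * f p = f e)"
    if p: "p \<in> A" for p
  proof -
    obtain q where q: "q \<in> A" "p * q = e" "q * p = e" using e(2) p by blast
    have "f e * f p = f p" "f p * f e = f p" "f p * f q = f e" "f q * f p = f e"
      using e p q hom[symmetric] by simp_all
    then show ?thesis using B q(1) by blast
  qed
  then have "\<forall>x\<in>B. f e * x = x \<and> x * f e = x \<and> (\<exists>y\<in>B. x * y = f e \<and> y * x = f e)"
    unfolding B by blast
  moreover have "f e \<in> B" using B e(1) by blast
  ultimately show ?thesis
    unfolding is_group_def by blast
qed

lemma is_group_bij_hom_preimage: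
  assumes bij: "bij_betw f A B"
    and hom: "\<And>x y. x \<in> A \<Longrightarrow> y \<in> A \<Longrightarrow> f (x * y) = f x * f y"
    and closed: "\<And>x y. x \<in> A \<Longrightarrow> y \<in> A \<Longrightarrow> x * y \<in> A"
    and B: "is_group B"
  shows "is_group A"
proof -
  have fA: "B = f ` A" and inj: "inj_on f A" using bij by (simp_all add: bij_betw_def)
  have cancel: "x = y" if "x \<in> A" "y \<in> A" "f x = f y" for x y
    using inj that by (simp add: inj_on_def)
  obtain e' where e': "e' \<in> B" "\<forall>x\<in>B. e' * x = x \<and> x * e' = x \<and> (\<exists>y\<in>B. x * y = e' \<and> y * x = e')"
    using B unfolding is_group_def by blast
  obtain e where e: "e \<in> A" "f e = e'" using fA e'(1) by blast
  have "\<forall>p\<in>A. e * p = p \<and> p * e = p \<and> (\<exists>q\<in>A. p * q = e \<and> q * p = e)"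
  proof
    fix p assume p: "p \<in> A"
    have "f p \<in> B" using fA p by blast
    then obtain q' where "q' \<in> B" "f p * q' = e'" "q' * f p = e'" using e'(2) by blast
    then obtain q where q: "q \<in> A" "f p * f q = e'" "f q * f p = e'" using fA by blast
    have "f e * f p = f p" "f p * f e = f p" using e'(2) e(2) \<open>f p \<in> B\<close> by simp_all
    then have "e * p = p" "p * e = p"
      using cancel[of "e * p" p] cancel[of "p * e" p] closed hom e(1) p by simp_all
    moreover have "p * q = e" "q * p = e"
      using cancel[of "p * q" e] cancel[of "q * p" e] closed hom e q p by simp_all
    ultimately show "e * p = p \<and> p * e = p \<and> (\<exists>q\<in>A. p * q = e \<and> q * p = e)"
      using q(1) by blast
  qed
  then show ?thesis
    unfolding is_group_def using closed e(1) by blast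
qed

locale idempotent_corner =
  fixes a :: "'a::semigroup_mult"
  assumes idem: "a * a = a"
    and corner_regular: "aSa a \<subseteq> Reg"
begin

lemma a_mult_a_mult [simp]: "a * (a * z) = a * z"
  by (simp add: idem flip: mult.assoc)

lemma mem_aSa_iff: "y \<in> aSa a \<longleftrightarrow> a * y = y \<and> y * a = y"
proof
  assume "y \<in> aSa a"
  then obtain s where "y = a * s * a" unfolding aSa_def by blast
  then show "a * y = y \<and> y * a = y" by (simp add: mult.assoc idem)
next
  assume "a * y = y \<and> y * a = y"
  then have "y = a * y * a" by simp
  then show "y \<in> aSa a" unfolding aSa_def by blast
qed

lemma mem_Pset_iff: "x \<in> Pset a \<longleftrightarrow> x * a = x \<and> (\<exists>t. x = t * (a * x))"
proof -
  have "x \<in> Sa a \<longleftrightarrow> x * a = x"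
  proof
    assume "x \<in> Sa a"
    then obtain s where "x = s * a" unfolding Sa_def by blast
    then show "x * a = x" by (simp add: mult.assoc idem)
  next
    assume "x * a = x"
    then show "x \<in> Sa a" unfolding Sa_def by (blast intro: sym)
  qed
  moreover have "gL UNIV x (a * x) \<longleftrightarrow> (\<exists>t. x = t * (a * x))"
  proof
    assume "gL UNIV x (a * x)"
    then have "x = a * x \<or> (\<exists>u. x = u * (a * x))" unfolding gL_def by blast
    then show "\<exists>t. x = t * (a * x)" using a_mult_a_mult by metis
  next
    assume "\<exists>t. x = t * (a * x)"
    then show "gL UNIV x (a * x)" unfolding gL_def by blast
  qed
  ultimately show ?thesis unfolding Pset_def by blast
qed

lemma Pset_right_unit: "x \<in> Pset a \<Longrightarrow> x * a = x"
  by (simp add: mem_Pset_iff)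

lemma Pset_mult_a: "x \<in> Pset a \<Longrightarrow> x * (a * z) = x * z"
  by (simp add: Pset_right_unit flip: mult.assoc)

lemma a_mem_aSa: "a \<in> aSa a"
  by (simp add: mem_aSa_iff idem)

lemma aSa_subset_Pset: "aSa a \<subseteq> Pset a"
proof
  fix y assume "y \<in> aSa a"
  then have "y * a = y" "y = a * (a * y)" by (simp_all add: mem_aSa_iff)
  then show "y \<in> Pset a" unfolding mem_Pset_iff by blast
qed

lemma a_mem_Pset: "a \<in> Pset a"
  using a_mem_aSa aSa_subset_Pset by blast

lemma a_mult_mem_aSa: "x \<in> Pset a \<Longrightarrow> a * x \<in> aSa a"
  by (simp add: mem_aSa_iff mult.assoc Pset_right_unit)

lemma aSa_mult_closed: "y \<in> aSa a \<Longrightarrow> z \<in> aSa a \<Longrightarrow> y * z \<in> aSa a"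
  by (simp add: mem_aSa_iff flip: mult.assoc) (simp add: mult.assoc)

lemma a_mult_hom: "x \<in> Pset a \<Longrightarrow> a * (x * y) = a * x * (a * y)"
  by (simp add: mult.assoc Pset_mult_a)

lemma Pset_cancel_a:
  assumes "x \<in> Pset a" and "a * x * u = a * x * v"
  shows "x * u = x * v"
proof -
  obtain t where t: "x = t * (a * x)" using assms(1) mem_Pset_iff by blast
  have "x * u = t * (a * x) * u" using t by (rule arg_cong)
  also have "\<dots> = t * (a * x * u)" by (simp only: mult.assoc)
  also have "\<dots> = t * (a * x * v)" by (simp only: assms(2))
  also have "\<dots> = t * (a * x) * v" by (simp only: mult.assoc)
  also have "\<dots> = x * v" by (simp only: t[symmetric])
  finally show ?thesis .
qed

lemma Pset_mult_closed:
  assumes x: "x \<in> Pset a" and y: "y \<in> Pset a"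
  shows "x * y \<in> Pset a"
proof -
  obtain t where t: "x = t * (a * x)" using x mem_Pset_iff by blast
  have "x * y = t * (a * x) * y" using t by (rule arg_cong)
  then have "x * y = t * (a * (x * y))" by (simp only: mult.assoc)
  moreover have "x * y * a = x * y" by (simp add: mult.assoc Pset_right_unit[OF y])
  ultimately show ?thesis unfolding mem_Pset_iff by blast
qed

text \<open>Regularity of aSa enters here: the factor t in x = t a x can be chosen inside P.\<close>

lemma Pset_factor:
  assumes x: "x \<in> Pset a"
  shows "\<exists>q\<in>Pset a. x = q * (a * x)"
proof -
  obtain y where y: "a * x * y * (a * x) = a * x"
    using corner_regular a_mult_mem_aSa[OF x] unfolding Reg_def by blast
  have xa: "x * a = x" using x by (rule Pset_right_unit)
  have q: "x * (a * y * a) \<in> Pset a"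
    using Pset_mult_closed[OF x] aSa_subset_Pset by (auto simp: aSa_def)
  have "a * x * a = a * x" by (simp add: mult.assoc xa)
  also have "\<dots> = a * x * y * (a * x)" by (rule y[symmetric])
  also have "\<dots> = a * x * (y * (a * x))" by (simp only: mult.assoc)
  finally have "x * a = x * (y * (a * x))" by (rule Pset_cancel_a[OF x])
  then have "x = x * (y * (a * x))" by (simp only: xa)
  also have "\<dots> = x * (a * y * a) * (a * x)" by (simp add: mult.assoc Pset_mult_a[OF x])
  finally show ?thesis using q by blast
qed

lemma gR_Pset_iff:
  "gR (Pset a) x y \<longleftrightarrow>
    x \<in> Pset a \<and> y \<in> Pset a \<and> (\<exists>u\<in>Pset a. x = y * u) \<and> (\<exists>v\<in>Pset a. y = x * v)"
  by (rule gR_iff_right_units) (use a_mem_Pset Pset_right_unit in blast)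

lemma gL_Pset_iff:
  "gL (Pset a) x y \<longleftrightarrow>
    x \<in> Pset a \<and> y \<in> Pset a \<and> (\<exists>u\<in>Pset a. x = u * y) \<and> (\<exists>v\<in>Pset a. y = v * x)"
proof (rule gL_iff_left_units)
  fix y assume "y \<in> Pset a"
  then obtain q where q: "q \<in> Pset a" "y = q * (a * y)" using Pset_factor by blast
  have "q * a * y = y" by (simp add: mult.assoc q(2)[symmetric])
  moreover have "q * a \<in> Pset a" using Pset_mult_closed[OF q(1) a_mem_Pset] .
  ultimately show "\<exists>e\<in>Pset a. e * y = y" by blast
qed

lemma gR_aSa_iff:
  "gR (aSa a) x y \<longleftrightarrow>
    x \<in> aSa a \<and> y \<in> aSa a \<and> (\<exists>u\<in>aSa a. x = y * u) \<and> (\<exists>v\<in>aSa a. y = x * v)"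
  by (rule gR_iff_right_units) (use a_mem_aSa mem_aSa_iff in blast)

lemma gL_aSa_iff:
  "gL (aSa a) x y \<longleftrightarrow>
    x \<in> aSa a \<and> y \<in> aSa a \<and> (\<exists>u\<in>aSa a. x = u * y) \<and> (\<exists>v\<in>aSa a. y = v * x)"
  by (rule gL_iff_left_units) (use a_mem_aSa mem_aSa_iff in blast)

lemma gR_Pset_trans: "gR (Pset a) x y \<Longrightarrow> gR (Pset a) y z \<Longrightarrow> gR (Pset a) x z"
  by (rule gR_trans[where T = "Pset a"]) (auto intro: Pset_mult_closed)

lemma gR_aSa_trans: "gR (aSa a) x y \<Longrightarrow> gR (aSa a) y z \<Longrightarrow> gR (aSa a) x z"
  by (rule gR_trans[where T = "aSa a"]) (auto intro: aSa_mult_closed)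

lemma gL_Pset_trans: "gL (Pset a) x y \<Longrightarrow> gL (Pset a) y z \<Longrightarrow> gL (Pset a) x z"
  by (rule gL_trans[where T = "Pset a"]) (auto intro: Pset_mult_closed)

lemma gclass_gR_Pset_eq: "gR (Pset a) y w \<Longrightarrow> gclass gR (Pset a) y = gclass gR (Pset a) w"
  by (rule gclass_gR_eq[where T = "Pset a"]) (auto intro: Pset_mult_closed)

lemma gL_Pset_iff_gL_aSa:
  assumes x: "x \<in> Pset a" and y: "y \<in> Pset a"
  shows "gL (Pset a) x y \<longleftrightarrow> gL (aSa a) (a * x) (a * y)"
proof
  assume "gL (Pset a) x y"
  then obtain u v where u: "u \<in> Pset a" "x = u * y" and v: "v \<in> Pset a" "y = v * x"
    unfolding gL_Pset_iff by blast
  have "a * x = a * u * (a * y)" using a_mult_hom[OF u(1)] u(2) by simp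
  moreover have "a * y = a * v * (a * x)" using a_mult_hom[OF v(1)] v(2) by simp
  moreover have "a * u \<in> aSa a" "a * v \<in> aSa a" using a_mult_mem_aSa u(1) v(1) by simp_all
  ultimately show "gL (aSa a) (a * x) (a * y)"
    unfolding gL_aSa_iff using a_mult_mem_aSa x y by blast
next
  have down: "\<exists>p\<in>Pset a. z = p * w"
    if z: "z \<in> Pset a" and m: "m \<in> aSa a" and e: "a * z = m * (a * w)" for z w m
  proof -
    obtain q where q: "q \<in> Pset a" "z = q * (a * z)" using Pset_factor[OF z] by blast
    from q(2) have "z = q * (m * (a * w))" by (simp only: e)
    then have "z = (q * m * a) * w" by (simp add: mult.assoc)
    moreover have "q * m * a \<in> Pset a"
      using q(1) m aSa_subset_Pset a_mem_Pset Pset_mult_closed by blast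
    ultimately show ?thesis by blast
  qed
  assume "gL (aSa a) (a * x) (a * y)"
  then obtain m n where "m \<in> aSa a" "a * x = m * (a * y)" "n \<in> aSa a" "a * y = n * (a * x)"
    unfolding gL_aSa_iff by blast
  then have "\<exists>p\<in>Pset a. x = p * y" "\<exists>p\<in>Pset a. y = p * x"
    using down[OF x] down[OF y] by simp_all
  then show "gL (Pset a) x y"
    unfolding gL_Pset_iff using x y by blast
qed

lemma gR_Pset_imp_gR_aSa:
  assumes "gR (Pset a) x y"
  shows "gR (aSa a) (a * x) (a * y)"
proof -
  obtain u v where x: "x \<in> Pset a" "x = y * u" "u \<in> Pset a"
    and y: "y \<in> Pset a" "y = x * v" "v \<in> Pset a"
    using assms unfolding gR_Pset_iff by blast
  have "a * x = a * y * (a * u)" using a_mult_hom[OF y(1)] x(2) by simp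
  moreover have "a * y = a * x * (a * v)" using a_mult_hom[OF x(1)] y(2) by simp
  ultimately show ?thesis
    unfolding gR_aSa_iff using a_mult_mem_aSa x y by blast
qed

lemma gR_Pset_inj:
  assumes "gR (Pset a) y z" and "a * y = a * z"
  shows "y = z"
proof -
  obtain v where y: "y \<in> Pset a" and z: "z = y * v"
    using assms(1) unfolding gR_Pset_iff by blast
  have "a * y * a = a * y" by (simp add: mult.assoc Pset_right_unit[OF y])
  also have "\<dots> = a * z" by (rule assms(2))
  also have "\<dots> = a * y * v" by (simp add: z mult.assoc)
  finally have "y * a = y * v" by (rule Pset_cancel_a[OF y])
  then show ?thesis by (simp add: z Pset_right_unit[OF y])
qed

lemma gR_aSa_lift:
  assumes w: "w \<in> Pset a" and u: "u \<in> aSa a" and R: "gR (aSa a) (a * w) (a * w * u)"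
  shows "gR (Pset a) (w * u) w"
proof -
  obtain v where v: "v \<in> aSa a" "a * w = a * w * u * v"
    using R unfolding gR_aSa_iff by blast
  have "a * w * a = a * w" by (simp add: mult.assoc Pset_right_unit[OF w])
  also have "\<dots> = a * w * u * v" by (rule v(2))
  also have "\<dots> = a * w * (u * v)" by (simp only: mult.assoc)
  finally have "w * a = w * (u * v)" by (rule Pset_cancel_a[OF w])
  then have "w = w * u * v" by (simp add: mult.assoc Pset_right_unit[OF w])
  then show ?thesis
    unfolding gR_Pset_iff using w u v(1) aSa_subset_Pset Pset_mult_closed by blast
qed

lemma gR_aSa_exists_lift:
  assumes w: "w \<in> Pset a" and R: "gR (aSa a) (a * w) c"
  shows "\<exists>y. gR (Pset a) y w \<and> a * y = c"
proof -
  obtain u where u: "u \<in> aSa a" "c = a * w * u"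
    using R unfolding gR_aSa_iff by blast
  have "gR (Pset a) (w * u) w"
    using gR_aSa_lift[OF w u(1)] R u(2) by simp
  moreover have "a * (w * u) = c" by (simp add: u(2) mult.assoc)
  ultimately show ?thesis by blast
qed

end

locale idempotent_corner_point = idempotent_corner +
  fixes x
  assumes x_mem: "x \<in> Pset a"
begin

abbreviation "HP \<equiv> gclass gH (Pset a) x"
abbreviation "HM \<equiv> gclass gH (aSa a) (a * x)"
abbreviation "Hhat \<equiv> hatclass gH a x"
abbreviation "Rcls \<equiv> {C. (\<exists>y\<in>Pset a. C = gclass gR (Pset a) y) \<and> C \<subseteq> hatclass gR a x}"

lemma mem_HM_iff: "c \<in> HM \<longleftrightarrow> gR (aSa a) (a * x) c \<and> gL (aSa a) (a * x) c"
  by (auto simp: mem_gclass gH_def)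

lemma HM_subset_aSa: "c \<in> HM \<Longrightarrow> c \<in> aSa a"
  by (simp add: mem_HM_iff gR_def)

lemma HM_gR: "c \<in> HM \<Longrightarrow> d \<in> HM \<Longrightarrow> gR (aSa a) c d"
  unfolding mem_HM_iff by (meson gR_sym gR_aSa_trans)

lemma mem_Hhat_iff: "y \<in> Hhat \<longleftrightarrow> y \<in> Pset a \<and> a * y \<in> HM"
  by (simp add: hatclass_def mem_gclass)

lemma Hhat_gL: "y \<in> Hhat \<Longrightarrow> gL (Pset a) x y"
  unfolding mem_Hhat_iff mem_HM_iff by (simp add: gL_Pset_iff_gL_aSa[OF x_mem])

lemma mem_HP_iff: "y \<in> HP \<longleftrightarrow> y \<in> Hhat \<and> gR (Pset a) x y"
proof
  assume "y \<in> HP"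
  then have R: "gR (Pset a) x y" and L: "gL (Pset a) x y" by (simp_all add: mem_gclass gH_def)
  have y: "y \<in> Pset a" using R by (simp add: gR_def)
  have "a * y \<in> HM"
    using gR_Pset_imp_gR_aSa[OF R] L gL_Pset_iff_gL_aSa[OF x_mem y] by (simp add: mem_HM_iff)
  with y R show "y \<in> Hhat \<and> gR (Pset a) x y" by (simp add: mem_Hhat_iff)
next
  assume "y \<in> Hhat \<and> gR (Pset a) x y"
  then show "y \<in> HP" using Hhat_gL by (simp add: mem_gclass gH_def)
qed

lemma phi_bij: "bij_betw (\<lambda>y. a * y) HP HM"
proof (rule bij_betw_imageI)
  show "inj_on (\<lambda>y. a * y) HP"
  proof (rule inj_onI)
    fix y z assume y: "y \<in> HP" and z: "z \<in> HP" and eq: "a * y = a * z"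
    have "gR (Pset a) y z"
      using y z gR_Pset_trans gR_sym by (meson mem_HP_iff)
    then show "y = z" using eq by (rule gR_Pset_inj)
  qed
  show "(\<lambda>y. a * y) ` HP = HM"
  proof
    show "(\<lambda>y. a * y) ` HP \<subseteq> HM"
      by (auto simp: mem_HP_iff mem_Hhat_iff)
    show "HM \<subseteq> (\<lambda>y. a * y) ` HP"
    proof
      fix c assume c: "c \<in> HM"
      then obtain y where y: "gR (Pset a) y x" "a * y = c"
        using gR_aSa_exists_lift[OF x_mem] by (auto simp: mem_HM_iff)
      then have "y \<in> HP"
        using c gR_sym[OF y(1)] by (simp add: mem_HP_iff mem_Hhat_iff gR_def)
      then show "c \<in> (\<lambda>y. a * y) ` HP" using y(2) by blast
    qed
  qed
qed

lemma phi_hom: "y \<in> HP \<Longrightarrow> a * (y * z) = a * y * (a * z)"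
  by (simp add: mem_HP_iff mem_Hhat_iff a_mult_hom)

lemma HP_sg_iso_HM: "sg_iso HP HM"
  unfolding sg_iso_def using phi_bij phi_hom by blast

lemma Hhat_mult:
  assumes G: "is_group HM" and y: "y \<in> Hhat" and z: "z \<in> Hhat"
  shows "y * z \<in> Hhat \<and> gR (Pset a) (y * z) y"
proof -
  have yP: "y \<in> Pset a" and ay: "a * y \<in> HM" and az: "a * z \<in> HM"
    using y z by (simp_all add: mem_Hhat_iff)
  have prod: "a * y * (a * z) \<in> HM" using is_group_closed[OF G ay az] .
  have "gR (Pset a) (y * (a * z)) y"
    using gR_aSa_lift[OF yP HM_subset_aSa[OF az] HM_gR[OF ay prod]] .
  moreover have "y * (a * z) = y * z" using Pset_mult_a[OF yP] .
  moreover have "y * z \<in> Pset a"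
    using Pset_mult_closed yP z by (simp add: mem_Hhat_iff)
  moreover have "a * (y * z) \<in> HM" using prod a_mult_hom[OF yP] by simp
  ultimately show ?thesis by (simp add: mem_Hhat_iff)
qed

lemma HP_mult_closed:
  assumes G: "is_group HM" and y: "y \<in> HP" and z: "z \<in> HP"
  shows "y * z \<in> HP"
proof -
  have "y * z \<in> Hhat" and "gR (Pset a) (y * z) y"
    using Hhat_mult[OF G] y z by (simp_all add: mem_HP_iff)
  moreover have "gR (Pset a) x y" using y by (simp add: mem_HP_iff)
  ultimately show ?thesis
    using gR_Pset_trans gR_sym by (meson mem_HP_iff)
qed

lemma is_group_HP_iff: "is_group HP \<longleftrightarrow> is_group HM"
  using is_group_bij_hom_image[OF phi_bij phi_hom]
    is_group_bij_hom_preimage[OF phi_bij phi_hom HP_mult_closed] by blast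

abbreviation "phi_inv \<equiv> the_inv_into HP (\<lambda>y. a * y)"

lemma phi_inv_mem: "c \<in> HM \<Longrightarrow> phi_inv c \<in> HP"
  by (rule bij_betw_apply[OF bij_betw_the_inv_into[OF phi_bij]])

lemma a_mult_phi_inv: "c \<in> HM \<Longrightarrow> a * phi_inv c = c"
  using f_the_inv_into_f_bij_betw[OF phi_bij] by simp

lemma phi_inv_a_mult: "y \<in> HP \<Longrightarrow> phi_inv (a * y) = y"
  using the_inv_into_f_f phi_bij by (fastforce simp: bij_betw_def)

lemma phi_inv_mult:
  assumes H: "is_group HP" and g: "g \<in> HM" and h: "h \<in> HM"
  shows "phi_inv (g * h) = phi_inv g * phi_inv h"
proof -
  have "phi_inv g * phi_inv h \<in> HP"
    using is_group_closed[OF H] phi_inv_mem g h by blast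
  moreover have "a * (phi_inv g * phi_inv h) = g * h"
    using phi_hom phi_inv_mem a_mult_phi_inv g h by simp
  ultimately show ?thesis using phi_inv_a_mult by metis
qed

lemma gclass_gR_mem_Rcls:
  assumes y: "y \<in> Pset a" and R: "gR (aSa a) (a * x) (a * y)"
  shows "gclass gR (Pset a) y \<in> Rcls"
proof -
  have "z \<in> hatclass gR a x" if z: "gR (Pset a) y z" for z
  proof -
    have "gR (aSa a) (a * x) (a * z)"
      using gR_aSa_trans[OF R gR_Pset_imp_gR_aSa[OF z]] .
    moreover have "z \<in> Pset a" using z by (simp add: gR_def)
    ultimately show ?thesis by (simp add: hatclass_def)
  qed
  then show ?thesis using y by (auto simp: mem_gclass)
qed

lemma Rcls_lift:
  assumes C: "C \<in> Rcls" and c: "c \<in> HM"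
  shows "\<exists>y\<in>Hhat. gclass gR (Pset a) y = C \<and> a * y = c"
proof -
  obtain w where w: "w \<in> Pset a" "C = gclass gR (Pset a) w" "C \<subseteq> hatclass gR a x"
    using C by blast
  have "w \<in> hatclass gR a x" using w gR_refl[OF w(1)] by (auto simp: mem_gclass)
  then have "gR (aSa a) (a * w) (a * x)" by (simp add: hatclass_def gR_sym)
  then have "gR (aSa a) (a * w) c"
    using c gR_aSa_trans by (simp add: mem_HM_iff)
  then obtain y where y: "gR (Pset a) y w" "a * y = c"
    using gR_aSa_exists_lift[OF w(1)] by blast
  have "y \<in> Hhat" using y c by (simp add: mem_Hhat_iff gR_def)
  moreover have "gclass gR (Pset a) y = C"
    using gclass_gR_Pset_eq[OF y(1)] w(2) by simp
  ultimately show ?thesis using y(2) by blast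
qed

definition Hhat_coords :: "'a \<Rightarrow> 'a set \<times> 'a" where
  "Hhat_coords y = (gclass gR (Pset a) y, phi_inv (a * y))"

lemma Hhat_coords_inj: "inj_on Hhat_coords Hhat"
proof (rule inj_onI)
  fix y z assume y: "y \<in> Hhat" and z: "z \<in> Hhat" and eq: "Hhat_coords y = Hhat_coords z"
  have ay: "a * y \<in> HM" and az: "a * z \<in> HM" using y z by (simp_all add: mem_Hhat_iff)
  have "z \<in> gclass gR (Pset a) z"
    using z gR_refl[of z "Pset a"] by (simp add: mem_Hhat_iff mem_gclass)
  then have "z \<in> gclass gR (Pset a) y"
    using eq by (simp add: Hhat_coords_def)
  then have "gR (Pset a) y z" by (simp add: mem_gclass)
  moreover have "a * y = a * z"
  proof -
    have "a * y = a * phi_inv (a * y)" using a_mult_phi_inv[OF ay] by simp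
    also have "\<dots> = a * phi_inv (a * z)" using eq by (simp add: Hhat_coords_def)
    also have "\<dots> = a * z" using a_mult_phi_inv[OF az] .
    finally show ?thesis .
  qed
  ultimately show "y = z" by (rule gR_Pset_inj)
qed

lemma Hhat_coords_image: "Hhat_coords ` Hhat = Rcls \<times> HP"
proof
  show "Hhat_coords ` Hhat \<subseteq> Rcls \<times> HP"
  proof
    fix p assume "p \<in> Hhat_coords ` Hhat"
    then obtain y where y: "y \<in> Pset a" "a * y \<in> HM" "p = Hhat_coords y"
      by (auto simp: mem_Hhat_iff)
    then show "p \<in> Rcls \<times> HP"
      using gclass_gR_mem_Rcls[OF y(1)] phi_inv_mem[OF y(2)]
      by (simp add: Hhat_coords_def mem_HM_iff)
  qed
  show "Rcls \<times> HP \<subseteq> Hhat_coords ` Hhat"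
  proof
    fix p assume "p \<in> Rcls \<times> HP"
    then obtain C h where p: "p = (C, h)" "C \<in> Rcls" "h \<in> HP" by blast
    have "a * h \<in> HM" using p(3) by (simp add: mem_HP_iff mem_Hhat_iff)
    then obtain y where y: "y \<in> Hhat" "gclass gR (Pset a) y = C" "a * y = a * h"
      using Rcls_lift[OF p(2)] by blast
    have "p = Hhat_coords y"
      using y phi_inv_a_mult[OF p(3)] by (simp add: Hhat_coords_def p(1))
    then show "p \<in> Hhat_coords ` Hhat" using y(1) by (rule image_eqI)
  qed
qed

lemma Hhat_coords_mult:
  assumes H: "is_group HP" and y: "y \<in> Hhat" and z: "z \<in> Hhat"
  shows "Hhat_coords (y * z) = (fst (Hhat_coords y), snd (Hhat_coords y) * snd (Hhat_coords z))"
proof -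
  have G: "is_group HM" using H is_group_HP_iff by blast
  have yP: "y \<in> Pset a" and ay: "a * y \<in> HM" and az: "a * z \<in> HM"
    using y z by (simp_all add: mem_Hhat_iff)
  have "gclass gR (Pset a) (y * z) = gclass gR (Pset a) y"
    using gclass_gR_Pset_eq Hhat_mult[OF G y z] by blast
  moreover have "phi_inv (a * (y * z)) = phi_inv (a * y) * phi_inv (a * z)"
    using a_mult_hom[OF yP] phi_inv_mult[OF H ay az] by simp
  ultimately show ?thesis by (simp add: Hhat_coords_def)
qed

lemma Hhat_left_group:
  assumes H: "is_group HP"
  shows "left_group_over Hhat Rcls HP"
proof -
  have "\<forall>y\<in>Hhat. \<forall>z\<in>Hhat. y * z \<in> Hhat"
    using Hhat_mult is_group_HP_iff H by blast
  moreover have "bij_betw Hhat_coords Hhat (Rcls \<times> HP)"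
    unfolding bij_betw_def using Hhat_coords_inj Hhat_coords_image by blast
  ultimately show ?thesis
    unfolding left_group_over_def using H Hhat_coords_mult[OF H] by blast
qed

lemma Hhat_mult_idempotent:
  assumes e: "e \<in> Hhat" and f: "f \<in> Hhat" and ff: "f * f = f"
  shows "e * f = e"
proof -
  have "gL (Pset a) e f"
    using gL_Pset_trans[OF gL_sym[OF Hhat_gL[OF e]] Hhat_gL[OF f]] .
  then obtain u where "e = u * f" by (auto simp: gL_Pset_iff)
  then show ?thesis using ff by (simp add: mult.assoc)
qed

lemma Hhat_idempotents_bij_Rcls:
  assumes H: "is_group HP"
  shows "bij_betw (gclass gR (Pset a)) {e \<in> Hhat. e * e = e} Rcls"
proof (rule bij_betw_imageI)
  let ?E = "{e \<in> Hhat. e * e = e}"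
  show "inj_on (gclass gR (Pset a)) ?E"
  proof (rule inj_onI)
    fix e f assume e: "e \<in> ?E" and f: "f \<in> ?E"
      and eq: "gclass gR (Pset a) e = gclass gR (Pset a) f"
    have "f \<in> gclass gR (Pset a) f"
      using f gR_refl[of f "Pset a"] by (simp add: mem_Hhat_iff mem_gclass)
    then have "f \<in> gclass gR (Pset a) e" using eq by simp
    then have "gR (Pset a) e f" by (simp add: mem_gclass)
    then obtain v where "f = e * v" by (auto simp: gR_Pset_iff)
    then have "e * f = f" using e by (simp flip: mult.assoc)
    then show "e = f" using Hhat_mult_idempotent e f by simp
  qed
  show "gclass gR (Pset a) ` ?E = Rcls"
  proof
    show "gclass gR (Pset a) ` ?E \<subseteq> Rcls"
    proof
      fix C assume "C \<in> gclass gR (Pset a) ` ?E"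
      then obtain e where "e \<in> Pset a" "a * e \<in> HM" "C = gclass gR (Pset a) e"
        by (auto simp: mem_Hhat_iff)
      then show "C \<in> Rcls" using gclass_gR_mem_Rcls by (simp add: mem_HM_iff)
    qed
    show "Rcls \<subseteq> gclass gR (Pset a) ` ?E"
    proof
      fix C assume C: "C \<in> Rcls"
      have G: "is_group HM" using H is_group_HP_iff by blast
      obtain c where c: "c \<in> HM" "c * c = c" using is_group_has_idempotent[OF G] by blast
      then obtain y where y: "y \<in> Hhat" "gclass gR (Pset a) y = C" "a * y = c"
        using Rcls_lift[OF C] by blast
      have "y * y = y"
      proof (rule gR_Pset_inj)
        show "gR (Pset a) (y * y) y" using Hhat_mult[OF G y(1) y(1)] by blast
        show "a * (y * y) = a * y"
          using a_mult_hom y c by (simp add: mem_Hhat_iff)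
      qed
      then show "C \<in> gclass gR (Pset a) ` ?E" using y by auto
    qed
  qed
qed

lemma Hhat_idempotents:
  assumes "is_group HP"
  shows "left_zero_band {e \<in> Hhat. e * e = e} \<and> {e \<in> Hhat. e * e = e} \<approx> Rcls"
  unfolding left_zero_band_def eqpoll_def
  using Hhat_mult_idempotent Hhat_idempotents_bij_Rcls[OF assms] by blast

end

theorem theorem3p21:
  fixes a x :: "'a::semigroup_mult"
  assumes idem: "a * a = a"
    and reg: "aSa a \<subseteq> Reg"
    and xP: "x \<in> Pset a"
  defines "RPcls \<equiv> {C. (\<exists>y\<in>Pset a. C = gclass gR (Pset a) y) \<and> C \<subseteq> hatclass gR a x}"
  shows "bij_betw (\<lambda>y. a * y) (gclass gH (Pset a) x) (gclass gH (aSa a) (a * x)) \<and>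
         (is_group (gclass gH (Pset a) x) \<longleftrightarrow> is_group (gclass gH (aSa a) (a * x))) \<and>
         (is_group (gclass gH (Pset a) x) \<longrightarrow> sg_iso (gclass gH (Pset a) x) (gclass gH (aSa a) (a * x))) \<and>
         (is_group (gclass gH (Pset a) x) \<longrightarrow>
           (\<exists>U :: 'a set set. U \<approx> RPcls \<and> left_group_over (hatclass gH a x) U (gclass gH (Pset a) x))) \<and>
         (is_group (gclass gH (Pset a) x) \<longrightarrow>
           left_zero_band {e \<in> hatclass gH a x. e * e = e} \<and> {e \<in> hatclass gH a x. e * e = e} \<approx> RPcls)"
proof -
  interpret idempotent_corner_point a x
    using idem reg xP by unfold_locales
  have "is_group HP \<longrightarrow> (\<exists>U :: 'a set set. U \<approx> Rcls \<and> left_group_over Hhat U HP)"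
    using Hhat_left_group eqpoll_refl by blast
  then show ?thesis
    unfolding RPcls_def using phi_bij is_group_HP_iff HP_sg_iso_HM Hhat_idempotents by blast
qed

end
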